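(* For any frame $L$, the poset $\mathrm{F}(L)$ is Dedekind complete, i.e. every non-empty subset bounded above has a supremum in $\mathrm{F}(L)$ (and every non-empty subset bounded below has an infimum).
   Context: $\mathbb{Q}$ is the rationals. A sublocale of $L$ is a subset closed under arbitrary meets and such that $x\to s\in S$ for $x\in L$, $s\in S$; $\mathrm{coS}(L)$ is the frame of sublocales ordered by reverse inclusion, with pseudocomplement $^\ast$. The frame $\mathfrak{L}(\overline{\mathbb{IR}})$ is presented by generators $(r,\textsf{---})$, $(\textsf{---},s)$ ($r,s\in\mathbb{Q}$) with relations (r1) $(r,\textsf{---})\wedge(\textsf{---},s)=0$ for $r\ge s$; (r3) $(r,\textsf{---})=\bigvee_{s>r}(s,\textsf{---})$; (r4) $(\textsf{---},s)=\bigvee_{r<s}(\textsf{---},r)$. $\overline{\mathrm{F}}(L)$ is the set of frame homomorphisms $f\colon\mathfrak{L}(\overline{\mathbb{IR}})\to\mathrm{coS}(L)$ with $f(r,\textsf{---})^\ast\le f(\textsf{---},s)$ and $f(\textsf{---},s)^\ast\le f(r,\textsf{---})$ for $r<s$, ordered by $f\le g$ iff $f(r,\textsf{---})\le g(r,\textsf{---})$ and $g(\textsf{---},s)\le f(\textsf{---},s)$; it is a complete lattice with top $\boldsymbol{+\infty}$ ($(r,\textsf{---})\mapsto1$, $(\textsf{---},s)\mapsto0$) and bottom $\boldsymbol{-\infty}$ ($(r,\textsf{---})\mapsto0$, $(\textsf{---},s)\mapsto1$). $\mathrm{F}(L)$ is the subposet of $f\in\overline{\mathrm{F}}(L)$ such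 that for all $g\in\overline{\mathrm{F}}(L)$, $f\vee g=\boldsymbol{+\infty}\Rightarrow g=\boldsymbol{+\infty}$ and $f\wedge g=\boldsymbol{-\infty}\Rightarrow g=\boldsymbol{-\infty}$. *)

theory Defs
  imports Complex_Main
begin

text \<open>A frame is a complete lattice satisfying x \<sqinter> \<Squnion>S = \<Squnion>{x \<sqinter> s | s \<in> S};
  this is imposed as a hypothesis of the theorem on a type of class complete_lattice.\<close>

definition is_frame :: "'a::complete_lattice itself \<Rightarrow> bool" where
  "is_frame _ \<longleftrightarrow> (\<forall>(x::'a) S. inf x (Sup S) = Sup (inf x ` S))"

definition frame_imp :: "'a::complete_lattice \<Rightarrow> 'a \<Rightarrow> 'a" where
  "frame_imp x s = Sup {y. inf y x \<le> s}"

definition is_sublocale :: "'a::complete_lattice set \<Rightarrow> bool" where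
  "is_sublocale S \<longleftrightarrow> (\<forall>T. T \<subseteq> S \<longrightarrow> Inf T \<in> S) \<and>
                       (\<forall>x s. s \<in> S \<longrightarrow> frame_imp x s \<in> S)"

text \<open>coS(L): sublocales ordered by reverse inclusion.\<close>
definition cos_le :: "'a set \<Rightarrow> 'a set \<Rightarrow> bool" where
  "cos_le S T \<longleftrightarrow> T \<subseteq> S"

definition cos_top :: "'a::complete_lattice set" where
  "cos_top = {top}"

definition cos_bot :: "'a set" where
  "cos_bot = UNIV"

text \<open>Binary meet in coS(L) = join of sublocales = sublocale generated by the union.\<close>
definition cos_inf :: "'a::complete_lattice set \<Rightarrow> 'a set \<Rightarrow> 'a set" where
  "cos_inf S T = \<Inter>{U. is_sublocale U \<and> S \<union> T \<subseteq> U}"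

definition cos_Sup :: "'a set set \<Rightarrow> 'a set" where
  "cos_Sup \<S> = \<Inter>\<S>"

definition cos_pc :: "'a::complete_lattice set \<Rightarrow> 'a set" where
  "cos_pc S = cos_Sup {T. is_sublocale T \<and> cos_inf S T = cos_bot}"

text \<open>A frame homomorphism from the presented frame L(IR-bar) to coS(L) is the same as an
  assignment of the generators (r,---) and (---,s) satisfying relations (r1),(r3),(r4);
  we represent f by the pair (u,d) with u r = f(r,---), d s = f(---,s).\<close>
type_synonym 'a rfun = "(rat \<Rightarrow> 'a set) \<times> (rat \<Rightarrow> 'a set)"

definition Fbar :: "('a::complete_lattice) rfun set" where
  "Fbar = {(u, d).
     (\<forall>r. is_sublocale (u r)) \<and> (\<forall>s. is_sublocale (d s)) \<and>
     (\<forall>r s. s \<le> r \<longrightarrow> cos_inf (u r) (d s) = cos_bot) \<and>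
     (\<forall>r. u r = cos_Sup (u ` {s. r < s})) \<and>
     (\<forall>s. d s = cos_Sup (d ` {r. r < s})) \<and>
     (\<forall>r s. r < s \<longrightarrow> cos_le (cos_pc (u r)) (d s) \<and> cos_le (cos_pc (d s)) (u r))}"

definition fle :: "'a rfun \<Rightarrow> 'a rfun \<Rightarrow> bool" where
  "fle f g \<longleftrightarrow> (\<forall>r. cos_le (fst f r) (fst g r)) \<and> (\<forall>s. cos_le (snd g s) (snd f s))"

definition pinf :: "'a::complete_lattice rfun" where
  "pinf = (\<lambda>_. cos_top, \<lambda>_. cos_bot)"

definition minf :: "'a::complete_lattice rfun" where
  "minf = (\<lambda>_. cos_bot, \<lambda>_. cos_top)"

definition is_lub_in :: "'a rfun set \<Rightarrow> 'a rfun set \<Rightarrow> 'a rfun \<Rightarrow> bool" where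
  "is_lub_in P A x \<longleftrightarrow> x \<in> P \<and> (\<forall>a\<in>A. fle a x) \<and> (\<forall>y\<in>P. (\<forall>a\<in>A. fle a y) \<longrightarrow> fle x y)"

definition is_glb_in :: "'a rfun set \<Rightarrow> 'a rfun set \<Rightarrow> 'a rfun \<Rightarrow> bool" where
  "is_glb_in P A x \<longleftrightarrow> x \<in> P \<and> (\<forall>a\<in>A. fle x a) \<and> (\<forall>y\<in>P. (\<forall>a\<in>A. fle y a) \<longrightarrow> fle y x)"

definition FL :: "('a::complete_lattice) rfun set" where
  "FL = {f \<in> Fbar. \<forall>g\<in>Fbar.
          (is_lub_in Fbar {f, g} pinf \<longrightarrow> g = pinf) \<and>
          (is_glb_in Fbar {f, g} minf \<longrightarrow> g = minf)}"

end

theory Submission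
  imports Defs
begin

text \<open>
  Every subset A of F-bar(L) has a supremum there. Joins in coS(L) are intersections, so the
  pointwise join u(r) = \<Inter>{a(r,---) | a \<in> A} is again sublocale-valued, but it need not satisfy
  the relations. It is regularised to d(s) = \<Inter>{u(r)^* | r < s} and u'(r) = \<Inter>{d(s)^* | s > r},
  the same formulas that recover every f \<in> F-bar(L) from either of its two halves. Relation (r1)
  for (u', d) rests on the coframe law of sublocales in the form: if S \<or> T = L for all T \<in> \<T>,
  then S \<or> \<Inter>\<T> = L. Infima follow from the order-reversing symmetry r \<mapsto> -r, which exchanges
  the two families of generators.

  F(L) is order-convex in F-bar(L): each of its two defining conditions passes from an element
  of F(L) to everything below, resp. above, it. Hence the supremum in F-bar(L) of a nonempty
  set bounded in F(L) lies between a member of the set and the bound, so it belongs to F(L),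
  where it is still the least upper bound; dually for infima.
\<close>

lemma is_sublocale_Inter: "(\<And>S. S \<in> SS \<Longrightarrow> is_sublocale S) \<Longrightarrow> is_sublocale (\<Inter>SS)"
  unfolding is_sublocale_def by (meson Inter_iff subset_iff)

lemma sublocale_Inf_mem: "is_sublocale S \<Longrightarrow> T \<subseteq> S \<Longrightarrow> Inf T \<in> S"
  unfolding is_sublocale_def by blast

lemma sublocale_frame_imp_mem: "is_sublocale S \<Longrightarrow> s \<in> S \<Longrightarrow> frame_imp x s \<in> S"
  unfolding is_sublocale_def by blast

lemma sublocale_top_mem: "is_sublocale S \<Longrightarrow> top \<in> S"
  using sublocale_Inf_mem[of S "{}"] by simp

lemma sublocale_inf_mem: "is_sublocale S \<Longrightarrow> a \<in> S \<Longrightarrow> b \<in> S \<Longrightarrow> inf a b \<in> S"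
  using sublocale_Inf_mem[of S "{a, b}"] by simp

lemma cos_inf_commute: "cos_inf S T = cos_inf T S"
  unfolding cos_inf_def by (simp add: Un_commute)

lemma cos_inf_mono: "S \<subseteq> S' \<Longrightarrow> T \<subseteq> T' \<Longrightarrow> cos_inf S T \<subseteq> cos_inf S' T'"
  unfolding cos_inf_def by blast

lemma is_sublocale_cos_pc: "is_sublocale (cos_pc S)"
  unfolding cos_pc_def cos_Sup_def by (rule is_sublocale_Inter) blast

lemma cos_pc_least: "is_sublocale T \<Longrightarrow> cos_inf S T = UNIV \<Longrightarrow> cos_pc S \<subseteq> T"
  unfolding cos_pc_def cos_Sup_def cos_bot_def by blast

context
  assumes frame: "is_frame TYPE('a::complete_lattice)"
begin

lemma le_frame_imp_iff: "(y::'a) \<le> frame_imp x s \<longleftrightarrow> inf y x \<le> s"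
proof
  assume "inf y x \<le> s"
  then show "y \<le> frame_imp x s"
    unfolding frame_imp_def by (simp add: Sup_upper)
next
  assume "y \<le> frame_imp x s"
  then have "inf y x \<le> inf x (frame_imp x s)"
    by (simp add: le_infI1 le_infI2)
  also have "\<dots> = Sup (inf x ` {y. inf y x \<le> s})"
    using frame unfolding is_frame_def frame_imp_def by blast
  also have "\<dots> \<le> s"
    by (auto intro!: Sup_least simp: inf_commute)
  finally show "inf y x \<le> s" .
qed

lemma frame_imp_inf_le: "inf (frame_imp x s) x \<le> (s::'a)"
  using le_frame_imp_iff by blast

lemma frame_imp_eq_top: "x \<le> s \<Longrightarrow> frame_imp x s = (top::'a)"
  using le_frame_imp_iff[of top x s] by (simp add: top_unique)

lemma frame_imp_inf: "frame_imp x (inf s t) = inf (frame_imp x s) (frame_imp x (t::'a))"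
proof (rule order_antisym)
  show "frame_imp x (inf s t) \<le> inf (frame_imp x s) (frame_imp x t)"
    using frame_imp_inf_le[of x "inf s t"] by (simp add: le_frame_imp_iff)
  show "inf (frame_imp x s) (frame_imp x t) \<le> frame_imp x (inf s t)"
    unfolding le_frame_imp_iff
    using le_frame_imp_iff[of "inf (frame_imp x s) (frame_imp x t)" x s]
      le_frame_imp_iff[of "inf (frame_imp x s) (frame_imp x t)" x t]
    by simp
qed

lemma is_sublocale_inf_image:
  assumes S: "is_sublocale (S::'a set)" and T: "is_sublocale T"
  shows "is_sublocale {inf s t | s t. s \<in> S \<and> t \<in> T}"
  unfolding is_sublocale_def
proof (intro conjI allI impI)
  fix X assume "X \<subseteq> {inf s t | s t. s \<in> S \<and> t \<in> T}"
  then have "\<forall>x\<in>X. \<exists>s t. s \<in> S \<and> t \<in> T \<and> x = inf s t"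
    by blast
  then obtain \<sigma> \<tau> where \<sigma>\<tau>: "\<forall>x\<in>X. \<sigma> x \<in> S \<and> \<tau> x \<in> T \<and> x = inf (\<sigma> x) (\<tau> x)"
    by metis
  have "Inf X = (INF x\<in>X. inf (\<sigma> x) (\<tau> x))"
    using \<sigma>\<tau> by (subst image_ident[symmetric]) (rule INF_cong; blast)
  also have "\<dots> = inf (Inf (\<sigma> ` X)) (Inf (\<tau> ` X))"
    by (rule INF_inf_distrib[symmetric])
  finally show "Inf X \<in> {inf s t | s t. s \<in> S \<and> t \<in> T}"
    using \<sigma>\<tau> sublocale_Inf_mem[OF S, of "\<sigma> ` X"] sublocale_Inf_mem[OF T, of "\<tau> ` X"] by blast
next
  fix x u assume "u \<in> {inf s t | s t. s \<in> S \<and> t \<in> T}"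
  then obtain s t where "s \<in> S" "t \<in> T" "u = inf s t"
    by blast
  then show "frame_imp x u \<in> {inf s t | s t. s \<in> S \<and> t \<in> T}"
    using sublocale_frame_imp_mem[OF S] sublocale_frame_imp_mem[OF T] frame_imp_inf by blast
qed

lemma cos_inf_eq:
  assumes S: "is_sublocale (S::'a set)" and T: "is_sublocale T"
  shows "cos_inf S T = {inf s t | s t. s \<in> S \<and> t \<in> T}"
proof
  have "S \<union> T \<subseteq> {inf s t | s t. s \<in> S \<and> t \<in> T}"
  proof
    fix x assume "x \<in> S \<union> T"
    moreover have "x = inf x top" "x = inf top x"
      by simp_all
    ultimately show "x \<in> {inf s t | s t. s \<in> S \<and> t \<in> T}"
      using sublocale_top_mem[OF S] sublocale_top_mem[OF T] by blast
  qed
  then show "cos_inf S T \<subseteq> {inf s t | s t. s \<in> S \<and> t \<in> T}"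
    unfolding cos_inf_def using is_sublocale_inf_image[OF S T] by blast
  show "{inf s t | s t. s \<in> S \<and> t \<in> T} \<subseteq> cos_inf S T"
    unfolding cos_inf_def by (blast intro: sublocale_inf_mem)
qed

lemma cos_inf_Inter_eq_UNIV:
  assumes S: "is_sublocale (S::'a set)"
    and TT: "\<And>T. T \<in> TT \<Longrightarrow> is_sublocale T"
    and compl: "\<And>T. T \<in> TT \<Longrightarrow> cos_inf T S = UNIV"
  shows "cos_inf (\<Inter>TT) S = UNIV"
proof -
  have "x \<in> cos_inf (\<Inter>TT) S" for x
  proof -
    define s0 where "s0 = Inf {s \<in> S. x \<le> s}"
    have "s0 \<in> S"
      unfolding s0_def by (rule sublocale_Inf_mem[OF S]) blast
    have "x \<le> s0"
      unfolding s0_def by (rule Inf_greatest) blast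
    \<comment> \<open>writing x = t \<sqinter> s with t \<in> T and s \<in> S, we have s0 \<le> s, so s0 \<rightarrow> x = s0 \<rightarrow> t\<close>
    have "frame_imp s0 x \<in> T" if T: "T \<in> TT" for T
    proof -
      obtain t s where "t \<in> T" "s \<in> S" and x: "x = inf t s"
        using compl[OF T] cos_inf_eq[OF TT[OF T] S] by blast
      then have "s0 \<le> s"
        unfolding s0_def by (simp add: Inf_lower)
      then have "frame_imp s0 x = frame_imp s0 t"
        unfolding x frame_imp_inf by (simp add: frame_imp_eq_top)
      then show ?thesis
        using sublocale_frame_imp_mem[OF TT[OF T] \<open>t \<in> T\<close>] by simp
    qed
    moreover have "x = inf (frame_imp s0 x) s0"
      using \<open>x \<le> s0\<close> frame_imp_inf_le[of s0 x] le_frame_imp_iff[of x s0 x]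
      by (simp add: order_antisym)
    ultimately show ?thesis
      using cos_inf_eq[OF is_sublocale_Inter[OF TT] S] \<open>s0 \<in> S\<close> by blast
  qed
  then show ?thesis
    by blast
qed

lemma cos_inf_cos_pc: "is_sublocale (S::'a set) \<Longrightarrow> cos_inf (cos_pc S) S = UNIV"
  unfolding cos_pc_def cos_Sup_def cos_bot_def
  by (rule cos_inf_Inter_eq_UNIV) (auto simp: cos_inf_commute)

lemma cos_pc_antimono:
  assumes S: "is_sublocale (S::'a set)" and "S \<subseteq> S'"
  shows "cos_pc S' \<subseteq> cos_pc S"
proof (rule cos_pc_least[OF is_sublocale_cos_pc])
  have "cos_inf S (cos_pc S) \<subseteq> cos_inf S' (cos_pc S)"
    using \<open>S \<subseteq> S'\<close> by (rule cos_inf_mono) simp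
  moreover have "cos_inf S (cos_pc S) = UNIV"
    using cos_inf_cos_pc[OF S] by (simp add: cos_inf_commute)
  ultimately show "cos_inf S' (cos_pc S) = UNIV"
    by blast
qed

end

lemma fle_iff: "fle f g \<longleftrightarrow> (\<forall>r. fst g r \<subseteq> fst f r) \<and> (\<forall>s. snd f s \<subseteq> snd g s)"
  unfolding fle_def cos_le_def by simp

lemma fle_trans: "fle f g \<Longrightarrow> fle g h \<Longrightarrow> fle f h"
  unfolding fle_iff by blast

lemma Fbar_iff: "(u, d) \<in> Fbar \<longleftrightarrow>
   (\<forall>r. is_sublocale (u r)) \<and> (\<forall>s. is_sublocale (d s)) \<and>
   (\<forall>r s. s \<le> r \<longrightarrow> cos_inf (u r) (d s) = UNIV) \<and>
   (\<forall>r. u r = (\<Inter>s\<in>{s. r < s}. u s)) \<and>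
   (\<forall>s. d s = (\<Inter>r\<in>{r. r < s}. d r)) \<and>
   (\<forall>r s. r < s \<longrightarrow> d s \<subseteq> cos_pc (u r) \<and> u r \<subseteq> cos_pc (d s))"
  unfolding Fbar_def cos_le_def cos_Sup_def cos_bot_def by simp

lemma FbarD:
  assumes "f \<in> Fbar"
  shows "is_sublocale (fst f r)" "is_sublocale (snd f s)"
    "s \<le> r \<Longrightarrow> cos_inf (fst f r) (snd f s) = UNIV"
    "fst f r = (\<Inter>s\<in>{s. r < s}. fst f s)"
    "snd f s = (\<Inter>r\<in>{r. r < s}. snd f r)"
    "r < s \<Longrightarrow> snd f s \<subseteq> cos_pc (fst f r)"
    "r < s \<Longrightarrow> fst f r \<subseteq> cos_pc (snd f s)"
  using assms unfolding Fbar_iff[of "fst f" "snd f", unfolded prod.collapse]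
  by (elim conjE; iprover)+

lemma FbarI:
  assumes "\<And>r. is_sublocale (u r)" "\<And>s. is_sublocale (d s)"
    "\<And>r s. s \<le> r \<Longrightarrow> cos_inf (u r) (d s) = UNIV"
    "\<And>r. u r = (\<Inter>s\<in>{s. r < s}. u s)"
    "\<And>s. d s = (\<Inter>r\<in>{r. r < s}. d r)"
    "\<And>r s. r < s \<Longrightarrow> d s \<subseteq> cos_pc (u r)"
    "\<And>r s. r < s \<Longrightarrow> u r \<subseteq> cos_pc (d s)"
  shows "(u, d) \<in> Fbar"
  unfolding Fbar_iff by (intro conjI allI impI) (erule assms | rule assms)+

lemma fle_pinf: "f \<in> Fbar \<Longrightarrow> fle f pinf"
  unfolding fle_iff pinf_def cos_top_def cos_bot_def by (simp add: FbarD(1) sublocale_top_mem)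

lemma minf_fle: "f \<in> Fbar \<Longrightarrow> fle minf f"
  unfolding fle_iff minf_def cos_top_def cos_bot_def by (simp add: FbarD(2) sublocale_top_mem)

lemma INT_less_INT_less:
  "(\<Inter>r\<in>{r. r < s}. \<Inter>t\<in>{t. t < r}. X t) = (\<Inter>t\<in>{t::'b::dense_order. t < s}. X t)"
proof
  show "(\<Inter>r\<in>{r. r < s}. \<Inter>t\<in>{t. t < r}. X t) \<subseteq> (\<Inter>t\<in>{t. t < s}. X t)"
  proof (rule INT_greatest)
    fix t assume "t \<in> {t. t < s}"
    then obtain r where "t < r" "r < s"
      using dense by auto
    then show "(\<Inter>r\<in>{r. r < s}. \<Inter>t\<in>{t. t < r}. X t) \<subseteq> X t"
      by blast
  qed
qed (auto dest: order.strict_trans)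

lemma INT_greater_INT_greater:
  "(\<Inter>s\<in>{s. r < s}. \<Inter>t\<in>{t. s < t}. X t) = (\<Inter>t\<in>{t::'b::dense_order. r < t}. X t)"
proof
  show "(\<Inter>s\<in>{s. r < s}. \<Inter>t\<in>{t. s < t}. X t) \<subseteq> (\<Inter>t\<in>{t. r < t}. X t)"
  proof (rule INT_greatest)
    fix t assume "t \<in> {t. r < t}"
    then obtain s where "r < s" "s < t"
      using dense by auto
    then show "(\<Inter>s\<in>{s. r < s}. \<Inter>t\<in>{t. s < t}. X t) \<subseteq> X t"
      by blast
  qed
qed (auto dest: order.strict_trans)

definition down_pc :: "(rat \<Rightarrow> 'a::complete_lattice set) \<Rightarrow> rat \<Rightarrow> 'a set" where
  "down_pc u s = (\<Inter>r\<in>{r. r < s}. cos_pc (u r))"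

definition up_pc :: "(rat \<Rightarrow> 'a::complete_lattice set) \<Rightarrow> rat \<Rightarrow> 'a set" where
  "up_pc d r = (\<Inter>s\<in>{s. r < s}. cos_pc (d s))"

lemma is_sublocale_down_pc: "is_sublocale (down_pc u s)"
  unfolding down_pc_def by (rule is_sublocale_Inter) (auto intro: is_sublocale_cos_pc)

lemma is_sublocale_up_pc: "is_sublocale (up_pc d r)"
  unfolding up_pc_def by (rule is_sublocale_Inter) (auto intro: is_sublocale_cos_pc)

lemma down_pc_left_continuous: "down_pc u s = (\<Inter>r\<in>{r. r < s}. down_pc u r)"
  unfolding down_pc_def by (rule INT_less_INT_less[symmetric])

lemma up_pc_right_continuous: "up_pc d r = (\<Inter>s\<in>{s. r < s}. up_pc d s)"
  unfolding up_pc_def by (rule INT_greater_INT_greater[symmetric])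

lemma down_pc_decreasing: "s \<le> t \<Longrightarrow> down_pc u t \<subseteq> down_pc u s"
  unfolding down_pc_def by auto

lemma Fbar_snd_eq_down_pc:
  assumes f: "f \<in> Fbar"
  shows "snd f = down_pc (fst f)"
proof
  fix s
  show "snd f s = down_pc (fst f) s"
  proof
    show "snd f s \<subseteq> down_pc (fst f) s"
      using FbarD(6)[OF f] unfolding down_pc_def by blast
    have "cos_pc (fst f r) \<subseteq> snd f r" for r
      by (rule cos_pc_least[OF FbarD(2)[OF f] FbarD(3)[OF f order_refl]])
    then have "down_pc (fst f) s \<subseteq> (\<Inter>r\<in>{r. r < s}. snd f r)"
      unfolding down_pc_def by (rule INF_mono')
    also have "\<dots> = snd f s"
      by (rule FbarD(5)[OF f, symmetric])
    finally show "down_pc (fst f) s \<subseteq> snd f s" .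
  qed
qed

lemma Fbar_fst_eq_up_pc:
  assumes f: "f \<in> Fbar"
  shows "fst f = up_pc (snd f)"
proof
  fix r
  show "fst f r = up_pc (snd f) r"
  proof
    show "fst f r \<subseteq> up_pc (snd f) r"
      using FbarD(7)[OF f] unfolding up_pc_def by blast
    have "cos_pc (snd f s) \<subseteq> fst f s" for s
      by (rule cos_pc_least[OF FbarD(1)[OF f]])
        (simp add: cos_inf_commute FbarD(3)[OF f order_refl])
    then have "up_pc (snd f) r \<subseteq> (\<Inter>s\<in>{s. r < s}. fst f s)"
      unfolding up_pc_def by (rule INF_mono')
    also have "\<dots> = fst f r"
      by (rule FbarD(4)[OF f, symmetric])
    finally show "up_pc (snd f) r \<subseteq> fst f r" .
  qed
qed

definition Fbar_Sup_snd :: "'a::complete_lattice rfun set \<Rightarrow> rat \<Rightarrow> 'a set" where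
  "Fbar_Sup_snd A = down_pc (\<lambda>r. \<Inter>a\<in>A. fst a r)"

definition Fbar_Sup :: "'a::complete_lattice rfun set \<Rightarrow> 'a rfun" where
  "Fbar_Sup A = (up_pc (Fbar_Sup_snd A), Fbar_Sup_snd A)"

definition rfun_dual :: "'a rfun \<Rightarrow> 'a rfun" where
  "rfun_dual f = (\<lambda>r. snd f (- r), \<lambda>s. fst f (- s))"

lemma rfun_dual_dual [simp]: "rfun_dual (rfun_dual f) = f"
  by (simp add: rfun_dual_def)

lemma fle_rfun_dual_iff [simp]: "fle (rfun_dual f) (rfun_dual g) \<longleftrightarrow> fle g f"
  unfolding fle_iff rfun_dual_def fst_conv snd_conv by (metis minus_minus)

lemma INT_greater_uminus: "(\<Inter>s\<in>{s. r < s}. X (- s)) = (\<Inter>t\<in>{t. t < - r}. X (t::rat))"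
proof (rule set_eqI)
  show "x \<in> (\<Inter>s\<in>{s. r < s}. X (- s)) \<longleftrightarrow> x \<in> (\<Inter>t\<in>{t. t < - r}. X t)" for x
    by simp (metis minus_less_iff minus_minus)
qed

lemma rfun_dual_in_Fbar:
  assumes f: "f \<in> Fbar"
  shows "rfun_dual f \<in> Fbar"
  unfolding rfun_dual_def
proof (rule FbarI)
  show "snd f (- r) = (\<Inter>s\<in>{s. r < s}. snd f (- s))" for r
    using FbarD(5)[OF f, of "- r"] by (simp add: INT_greater_uminus)
  show "fst f (- s) = (\<Inter>r\<in>{r. r < s}. fst f (- r))" for s
    using FbarD(4)[OF f, of "- s"] INT_greater_uminus[where r="- s" and X="\<lambda>t. fst f (- t)"] by simp
  show "cos_inf (snd f (- r)) (fst f (- s)) = UNIV" if "s \<le> r" for r s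
    using that FbarD(3)[OF f, where r="- s" and s="- r"] by (simp add: cos_inf_commute)
qed (use FbarD(1,2,6,7)[OF f] in simp_all)

lemma is_glb_in_rfun_dual:
  assumes P: "rfun_dual ` P \<subseteq> P" and lub: "is_lub_in P (rfun_dual ` A) x"
  shows "is_glb_in P A (rfun_dual x)"
  unfolding is_glb_in_def
proof (intro conjI ballI impI)
  show "rfun_dual x \<in> P"
    using P lub unfolding is_lub_in_def by blast
  show "fle (rfun_dual x) a" if "a \<in> A" for a
    using that lub fle_rfun_dual_iff[of x "rfun_dual a"] unfolding is_lub_in_def by simp
  show "fle y (rfun_dual x)" if "y \<in> P" and "\<forall>a\<in>A. fle y a" for y
    using that P lub fle_rfun_dual_iff[of "rfun_dual y" x] unfolding is_lub_in_def by auto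
qed

definition Fbar_Inf :: "'a::complete_lattice rfun set \<Rightarrow> 'a rfun" where
  "Fbar_Inf A = rfun_dual (Fbar_Sup (rfun_dual ` A))"

lemma is_lub_in_pair_mono:
  "is_lub_in P {s, g} x \<Longrightarrow> fle s b \<Longrightarrow> fle b x \<Longrightarrow> is_lub_in P {b, g} x"
  unfolding is_lub_in_def by (blast intro: fle_trans)

lemma is_glb_in_pair_mono:
  "is_glb_in P {s, g} x \<Longrightarrow> fle a s \<Longrightarrow> fle x a \<Longrightarrow> is_glb_in P {a, g} x"
  unfolding is_glb_in_def by (blast intro: fle_trans)

lemma FL_convex:
  assumes a: "a \<in> FL" and b: "b \<in> FL" and s: "s \<in> Fbar" and "fle a s" "fle s b"
  shows "s \<in> FL"
proof -
  have "a \<in> Fbar" "b \<in> Fbar"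
    using a b unfolding FL_def by simp_all
  have "g = pinf" if "g \<in> Fbar" "is_lub_in Fbar {s, g} pinf" for g
    using b that is_lub_in_pair_mono[OF that(2) \<open>fle s b\<close> fle_pinf[OF \<open>b \<in> Fbar\<close>]]
    unfolding FL_def by blast
  moreover have "g = minf" if "g \<in> Fbar" "is_glb_in Fbar {s, g} minf" for g
    using a that is_glb_in_pair_mono[OF that(2) \<open>fle a s\<close> minf_fle[OF \<open>a \<in> Fbar\<close>]]
    unfolding FL_def by blast
  ultimately show ?thesis
    using s unfolding FL_def by blast
qed

lemma is_lub_in_subset: "is_lub_in P A x \<Longrightarrow> Q \<subseteq> P \<Longrightarrow> x \<in> Q \<Longrightarrow> is_lub_in Q A x"
  unfolding is_lub_in_def by blast

lemma is_glb_in_subset: "is_glb_in P A x \<Longrightarrow> Q \<subseteq> P \<Longrightarrow> x \<in> Q \<Longrightarrow> is_glb_in Q A x"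
  unfolding is_glb_in_def by blast

context
  assumes frame: "is_frame TYPE('a::complete_lattice)"
begin

lemma down_pc_antimono:
  "(\<And>r. is_sublocale ((u::rat \<Rightarrow> 'a set) r)) \<Longrightarrow> (\<And>r. u r \<subseteq> u' r) \<Longrightarrow> down_pc u' s \<subseteq> down_pc u s"
  unfolding down_pc_def by (rule INF_mono') (rule cos_pc_antimono[OF frame])

lemma up_pc_antimono:
  "(\<And>s. is_sublocale ((d::rat \<Rightarrow> 'a set) s)) \<Longrightarrow> (\<And>s. d s \<subseteq> d' s) \<Longrightarrow> up_pc d' r \<subseteq> up_pc d r"
  unfolding up_pc_def by (rule INF_mono') (rule cos_pc_antimono[OF frame])

lemma cos_inf_up_pc_eq_UNIV:
  assumes sub: "\<And>s. is_sublocale ((d::rat \<Rightarrow> 'a set) s)"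
    and decr: "\<And>s t. s \<le> t \<Longrightarrow> d t \<subseteq> d s" and "s \<le> r"
  shows "cos_inf (up_pc d r) (d s) = UNIV"
  unfolding up_pc_def
proof (rule cos_inf_Inter_eq_UNIV[OF frame sub])
  fix T assume "T \<in> (\<lambda>t. cos_pc (d t)) ` {t. r < t}"
  then obtain t where "r < t" and T: "T = cos_pc (d t)"
    by blast
  show "is_sublocale T"
    unfolding T by (rule is_sublocale_cos_pc)
  have "cos_inf (cos_pc (d t)) (d t) \<subseteq> cos_inf (cos_pc (d t)) (d s)"
    using \<open>s \<le> r\<close> \<open>r < t\<close> decr[of s t] by (intro cos_inf_mono) simp_all
  then show "cos_inf T (d s) = UNIV"
    unfolding T using cos_inf_cos_pc[OF frame sub] by blast
qed

lemma is_sublocale_INT_fst: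
  "A \<subseteq> Fbar \<Longrightarrow> is_sublocale (\<Inter>a\<in>(A::'a rfun set). fst a r)"
  by (rule is_sublocale_Inter) (auto intro: FbarD(1))

lemma Fbar_Sup_upper:
  assumes A: "A \<subseteq> (Fbar::'a rfun set)" and "a \<in> A"
  shows "fle a (Fbar_Sup A)"
proof -
  have a: "a \<in> Fbar"
    using assms by blast
  have "snd a s \<subseteq> Fbar_Sup_snd A s" for s
    unfolding Fbar_snd_eq_down_pc[OF a] Fbar_Sup_snd_def
    using is_sublocale_INT_fst[OF A] \<open>a \<in> A\<close> by (intro down_pc_antimono) blast+
  then have "up_pc (Fbar_Sup_snd A) r \<subseteq> fst a r" for r
    unfolding Fbar_fst_eq_up_pc[OF a] using FbarD(2)[OF a] by (intro up_pc_antimono)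
  with \<open>snd a _ \<subseteq> _\<close> show ?thesis
    unfolding fle_iff Fbar_Sup_def by simp
qed

lemma Fbar_Sup_least:
  assumes g: "(g::'a rfun) \<in> Fbar" and ub: "\<forall>a\<in>A. fle a g"
  shows "fle (Fbar_Sup A) g"
proof -
  have "Fbar_Sup_snd A s \<subseteq> snd g s" for s
    unfolding Fbar_snd_eq_down_pc[OF g] Fbar_Sup_snd_def
    using FbarD(1)[OF g] ub by (intro down_pc_antimono) (auto simp: fle_iff)
  moreover from this have "fst g r \<subseteq> up_pc (Fbar_Sup_snd A) r" for r
    unfolding Fbar_fst_eq_up_pc[OF g] Fbar_Sup_snd_def
    using is_sublocale_down_pc by (intro up_pc_antimono)
  ultimately show ?thesis
    unfolding fle_iff Fbar_Sup_def by simp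
qed

lemma Fbar_Sup_in_Fbar:
  assumes A: "A \<subseteq> (Fbar::'a rfun set)"
  shows "Fbar_Sup A \<in> Fbar"
  unfolding Fbar_Sup_def
proof (rule FbarI)
  show "cos_inf (up_pc (Fbar_Sup_snd A) r) (Fbar_Sup_snd A s) = UNIV" if "s \<le> r" for r s
    unfolding Fbar_Sup_snd_def using that
    by (intro cos_inf_up_pc_eq_UNIV is_sublocale_down_pc down_pc_decreasing)
  show "Fbar_Sup_snd A s \<subseteq> cos_pc (up_pc (Fbar_Sup_snd A) r)" if "r < s" for r s
  proof -
    have "up_pc (Fbar_Sup_snd A) r \<subseteq> (\<Inter>a\<in>A. fst a r)"
      using Fbar_Sup_upper[OF A] unfolding fle_iff Fbar_Sup_def by auto
    then have "cos_pc (\<Inter>a\<in>A. fst a r) \<subseteq> cos_pc (up_pc (Fbar_Sup_snd A) r)"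
      by (intro cos_pc_antimono[OF frame] is_sublocale_up_pc)
    moreover have "Fbar_Sup_snd A s \<subseteq> cos_pc (\<Inter>a\<in>A. fst a r)"
      unfolding Fbar_Sup_snd_def down_pc_def using that by blast
    ultimately show ?thesis
      by blast
  qed
  show "up_pc (Fbar_Sup_snd A) r \<subseteq> cos_pc (Fbar_Sup_snd A s)" if "r < s" for r s
    unfolding up_pc_def using that by blast
qed (simp_all only: Fbar_Sup_snd_def is_sublocale_up_pc is_sublocale_down_pc
    up_pc_right_continuous[symmetric] down_pc_left_continuous[symmetric])

lemma is_lub_in_Fbar_Sup: "A \<subseteq> (Fbar::'a rfun set) \<Longrightarrow> is_lub_in Fbar A (Fbar_Sup A)"
  unfolding is_lub_in_def by (blast intro: Fbar_Sup_in_Fbar Fbar_Sup_upper Fbar_Sup_least)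

lemma is_glb_in_Fbar_Inf: "A \<subseteq> (Fbar::'a rfun set) \<Longrightarrow> is_glb_in Fbar A (Fbar_Inf A)"
  unfolding Fbar_Inf_def
  by (intro is_glb_in_rfun_dual is_lub_in_Fbar_Sup) (use rfun_dual_in_Fbar in blast)+

lemma is_lub_in_FL:
  assumes "A \<subseteq> FL" "a \<in> A" "b \<in> FL" "\<forall>a\<in>A. fle a (b::'a rfun)"
  shows "is_lub_in FL A (Fbar_Sup A)"
proof -
  have "FL \<subseteq> (Fbar::'a rfun set)"
    unfolding FL_def by blast
  then have lub: "is_lub_in Fbar A (Fbar_Sup A)"
    using assms(1) by (intro is_lub_in_Fbar_Sup) blast
  then have "Fbar_Sup A \<in> FL"
    using assms \<open>FL \<subseteq> Fbar\<close> unfolding is_lub_in_def by (blast intro: FL_convex)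
  with lub \<open>FL \<subseteq> Fbar\<close> show ?thesis
    by (rule is_lub_in_subset)
qed

lemma is_glb_in_FL:
  assumes "A \<subseteq> FL" "a \<in> A" "b \<in> FL" "\<forall>a\<in>A. fle (b::'a rfun) a"
  shows "is_glb_in FL A (Fbar_Inf A)"
proof -
  have "FL \<subseteq> (Fbar::'a rfun set)"
    unfolding FL_def by blast
  then have glb: "is_glb_in Fbar A (Fbar_Inf A)"
    using assms(1) by (intro is_glb_in_Fbar_Inf) blast
  then have "Fbar_Inf A \<in> FL"
    using assms \<open>FL \<subseteq> Fbar\<close> unfolding is_glb_in_def by (blast intro: FL_convex)
  with glb \<open>FL \<subseteq> Fbar\<close> show ?thesis
    by (rule is_glb_in_subset)
qed

end

theorem proposition6p1:
  fixes A :: "('a::complete_lattice) rfun set"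
  assumes "is_frame TYPE('a)"
  shows "(A \<subseteq> FL \<and> A \<noteq> {} \<and> (\<exists>b\<in>FL. \<forall>a\<in>A. fle a b) \<longrightarrow> (\<exists>s. is_lub_in FL A s)) \<and>
         (A \<subseteq> FL \<and> A \<noteq> {} \<and> (\<exists>b\<in>FL. \<forall>a\<in>A. fle b a) \<longrightarrow> (\<exists>s. is_glb_in FL A s))"
  using is_lub_in_FL[OF assms] is_glb_in_FL[OF assms] by blast

end
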